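(* Let $\ell\ge1$ and $n\ge\ell+1$ be integers, let $\mu>\ell-\frac32$ be real, $C_0\in\mathbb R$, and let $F_0(r)=C_0\,r^{\mu-\frac12}e^{-r/2}L^{(2\mu)}_{n-\ell-1}(r)$ for $r>0$, extended to $r<0$ by $F_0(-r)=(-1)^\ell F_0(r)$. Let $F(r,t)$ be the solution of $$F_{tt}-F_{rr}-\frac2rF_r+\frac{\ell(\ell+1)}{r^2}F=0,\qquad F(r,0)=F_0(r),\ F_t(r,0)=0,$$ given by $$F(r,t)=\frac1{2r}\big[(r-t)F_0(r-t)+(r+t)F_0(r+t)\big]-\frac{\ell(\ell+1)\,t}{4r^2}\int_{r-t}^{r+t}F_0(s)\,{}_2F_1\!\Big(1-\ell,\ell+2;2;\frac{t^2-(r-s)^2}{4rs}\Big)ds.$$ Then for every $r>0$ there exist constants $C(r)>0$ and $T(r)>0$ such that for all $t\ge T(r)$, $$\Big|F(r,t)-\frac1{2r}\big[(r-t)F_0(r-t)+(r+t)F_0(r+t)\big]\Big|\le C(r)\,e^{-t/2}\,t^{\,n+\mu-\frac32}.$$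
   Context: $L^{(\alpha)}_k$ denotes the generalized Laguerre polynomial of degree $k$; ${}_2F_1$ is the Gauss hypergeometric function (a polynomial of degree $\ell-1$ in its last argument here). This $F_0$ is the radial wave function of a pionic atom. *)

theory Defs
  imports "HOL-Analysis.Analysis"
begin

definition laguerre :: "nat \<Rightarrow> real \<Rightarrow> real \<Rightarrow> real" where
  "laguerre k \<alpha> x = (\<Sum>i\<le>k. (-1)^i * ((real k + \<alpha>) gchoose (k - i)) * x^i / fact i)"

definition hyp2f1_term :: "nat \<Rightarrow> real \<Rightarrow> real \<Rightarrow> real \<Rightarrow> real" where
  "hyp2f1_term m b c z =
     (\<Sum>j\<le>m. pochhammer (- real m) j * pochhammer b j / (pochhammer c j * fact j) * z^j)"

definition F0 :: "nat \<Rightarrow> nat \<Rightarrow> real \<Rightarrow> real \<Rightarrow> real \<Rightarrow> real" where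
  "F0 l n \<mu> C0 r =
     (if r > 0 then C0 * r powr (\<mu> - 1/2) * exp (- r / 2) * laguerre (n - l - 1) (2 * \<mu>) r
      else if r < 0 then (-1)^l * (C0 * (-r) powr (\<mu> - 1/2) * exp (r / 2) * laguerre (n - l - 1) (2 * \<mu>) (-r))
      else 0)"

definition Ffree :: "nat \<Rightarrow> nat \<Rightarrow> real \<Rightarrow> real \<Rightarrow> real \<Rightarrow> real \<Rightarrow> real" where
  "Ffree l n \<mu> C0 r t =
     1 / (2 * r) * ((r - t) * F0 l n \<mu> C0 (r - t) + (r + t) * F0 l n \<mu> C0 (r + t))"

definition Fsol :: "nat \<Rightarrow> nat \<Rightarrow> real \<Rightarrow> real \<Rightarrow> real \<Rightarrow> real \<Rightarrow> real" where
  "Fsol l n \<mu> C0 r t =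
     Ffree l n \<mu> C0 r t
     - real (l * (l + 1)) * t / (4 * r^2) *
       (LINT s:{r - t..r + t}|lborel.
          F0 l n \<mu> C0 s * hyp2f1_term (l - 1) (real l + 2) 2 ((t^2 - (r - s)^2) / (4 * r * s)))"

end

theory Submission
  imports Defs "HOL-Computational_Algebra.Polynomial"
begin

text \<open>The kernel 2F1(1 - l, l + 2; 2; z) is a hypergeometric polynomial with a + b + 1 = 2c,
  so it has parity (-1)^(l-1) under z \<mapsto> 1 - z. For z = (t^2 - (r - s)^2) / (4rs) this reflection
  is exactly s \<mapsto> -s, and F0 has parity (-1)^l, so the integrand is odd in s. Its integral over
  [r - t, t - r] cancels, leaving the window (t - r, t + r] of length 2r. There
  F0(s) = O(t^(\<mu> - 1/2 + n - l - 1) e^(-t/2)) and the kernel is O(t^(l-1)), while the prefactor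
  l(l + 1) t / (4r^2) contributes one more power of t.\<close>

definition hyp2f1_coeff :: "nat \<Rightarrow> real \<Rightarrow> real \<Rightarrow> nat \<Rightarrow> real" where
  "hyp2f1_coeff m b c j = pochhammer (- real m) j * pochhammer b j / (pochhammer c j * fact j)"

definition hyp2f1_poly :: "nat \<Rightarrow> real \<Rightarrow> real \<Rightarrow> real poly" where
  "hyp2f1_poly m b c = (\<Sum>j\<le>m. monom (hyp2f1_coeff m b c j) j)"

lemma poly_hyp2f1_poly: "poly (hyp2f1_poly m b c) z = hyp2f1_term m b c z"
  unfolding hyp2f1_poly_def hyp2f1_term_def hyp2f1_coeff_def by (simp add: poly_sum poly_monom)

lemma coeff_hyp2f1_poly: "coeff (hyp2f1_poly m b c) j = hyp2f1_coeff m b c j"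
proof (cases "j \<le> m")
  case False
  then have "pochhammer (- real m) j = 0" by (auto simp: pochhammer_eq_0_iff)
  with False show ?thesis
    by (simp add: hyp2f1_poly_def hyp2f1_coeff_def coeff_sum coeff_monom)
qed (simp add: hyp2f1_poly_def coeff_sum coeff_monom)

lemma degree_hyp2f1_poly: "degree (hyp2f1_poly m b c) \<le> m"
  by (intro degree_le) (simp add: coeff_hyp2f1_poly hyp2f1_coeff_def pochhammer_eq_0_iff)

lemma hyp2f1_coeff_Suc:
  assumes "c > 0"
  shows "(real j + 1) * (real j + c) * hyp2f1_coeff m b c (Suc j)
           = (real j - real m) * (real j + b) * hyp2f1_coeff m b c j"
proof -
  have "pochhammer c j * (real j + c) * fact j * (real j + 1) \<noteq> 0"
    using assms pochhammer_pos[of c j] by (simp add: add_pos_pos)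
  then show ?thesis
    unfolding hyp2f1_coeff_def pochhammer_Suc fact_Suc
    by (simp add: divide_simps) (simp add: algebra_simps)
qed

definition hypergeometric_op :: "real \<Rightarrow> real \<Rightarrow> real \<Rightarrow> real poly \<Rightarrow> real poly" where
  "hypergeometric_op a b c p =
     [:0, 1, -1:] * pderiv (pderiv p) + [:c, -(a + b + 1):] * pderiv p - smult (a * b) p"

lemma coeff_hypergeometric_op:
  "coeff (hypergeometric_op a b c p) j =
     (real j + 1) * (real j + c) * coeff p (Suc j) - (real j + a) * (real j + b) * coeff p j"
proof -
  have quad: "[:0, 1, -1:] * q = pCons 0 q - pCons 0 (pCons 0 q)" for q :: "real poly"
    by (simp add: mult_pCons_left)
  have lin: "[:c, -(a + b + 1):] * q = smult c q + pCons 0 (smult (- (a + b + 1)) q)" for q :: "real poly"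
    by (simp add: mult_pCons_left)
  show ?thesis
    unfolding hypergeometric_op_def quad lin
    by (cases j; cases "j - 1") (auto simp: coeff_pderiv coeff_pCons algebra_simps)
qed

lemma hypergeometric_op_hyp2f1_poly:
  assumes "c > 0"
  shows "hypergeometric_op (- real m) b c (hyp2f1_poly m b c) = 0"
  by (rule poly_eqI)
     (simp add: coeff_hypergeometric_op coeff_hyp2f1_poly hyp2f1_coeff_Suc[OF assms])

lemma hypergeometric_op_linear:
  "hypergeometric_op a b c (smult u p - q) = smult u (hypergeometric_op a b c p) - hypergeometric_op a b c q"
  by (rule poly_eqI) (simp add: coeff_hypergeometric_op algebra_simps)

lemma hypergeometric_op_reflect:
  assumes "a + b + 1 = 2 * c"
  shows "hypergeometric_op a b c (p \<circ>\<^sub>p [:1, -1:]) = hypergeometric_op a b c p \<circ>\<^sub>p [:1, -1:]"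
proof -
  have "poly (hypergeometric_op a b c (p \<circ>\<^sub>p [:1, -1:])) z = poly (hypergeometric_op a b c p \<circ>\<^sub>p [:1, -1:]) z" for z
    using assms
    by (simp add: hypergeometric_op_def pderiv_pcompose pderiv_pCons pderiv_minus poly_pcompose algebra_simps)
  then show ?thesis by (simp add: poly_eq_poly_eq_iff[symmetric] fun_eq_iff)
qed

lemma hypergeometric_op_eq_0_imp_eq_0:
  assumes op: "hypergeometric_op (- real m) b c p = 0" and "degree p \<le> m" and "coeff p m = 0"
    and b: "\<And>j. j < m \<Longrightarrow> real j + b \<noteq> 0"
  shows "p = 0"
proof (rule poly_eqI)
  fix j
  show "coeff p j = coeff 0 j"
  proof (cases "j \<le> m")
    case True
    then show ?thesis
    proof (induction j rule: inc_induct)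
      case base
      show ?case using \<open>coeff p m = 0\<close> by simp
    next
      case (step j)
      have "(real j + 1) * (real j + c) * coeff p (Suc j) - (real j - real m) * (real j + b) * coeff p j = 0"
        using coeff_hypergeometric_op[of "- real m" b c p j] op by simp
      with step.IH have "(real j - real m) * (real j + b) * coeff p j = 0" by simp
      with step.hyps b show ?case by simp
    qed
  next
    case False
    then show ?thesis using \<open>degree p \<le> m\<close> by (simp add: coeff_eq_0)
  qed
qed

lemma coeff_pcompose_reflect:
  fixes p :: "real poly"
  assumes "degree p \<le> m"
  shows "coeff (p \<circ>\<^sub>p [:1, -1:]) m = (-1)^m * coeff p m"
proof (cases "degree p = m")
  case True
  then show ?thesis using lead_coeff_comp[of "[:1, -1:]" p] by (simp add: degree_pcompose)
next
  case False
  with assms have "degree (p \<circ>\<^sub>p [:1, -1:]) < m" "degree p < m" by (simp_all add: degree_pcompose)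
  then show ?thesis by (simp add: coeff_eq_0)
qed

text \<open>For a + b + 1 = 2c the hypergeometric operator commutes with z \<mapsto> 1 - z, and its polynomial
  solutions of degree at most m are determined by their z^m coefficient.\<close>
theorem hyp2f1_term_reflect:
  assumes "c > 0"
  shows "hyp2f1_term m (real m + 2 * c - 1) c (1 - z) = (-1)^m * hyp2f1_term m (real m + 2 * c - 1) c z"
proof -
  define b where "b = real m + 2 * c - 1"
  define Q where "Q = hyp2f1_poly m b c"
  define D where "D = smult ((-1)^m) (Q \<circ>\<^sub>p [:1, -1:]) - Q"
  have "degree Q \<le> m" unfolding Q_def by (rule degree_hyp2f1_poly)
  have "hypergeometric_op (- real m) b c D = 0"
    using hypergeometric_op_hyp2f1_poly[OF assms] hypergeometric_op_reflect[of "- real m" b c Q]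
    by (simp add: D_def Q_def b_def hypergeometric_op_linear)
  moreover have "degree D \<le> m"
    using \<open>degree Q \<le> m\<close> by (simp add: D_def degree_diff_le degree_pcompose)
  moreover have "coeff D m = 0"
    using coeff_pcompose_reflect[OF \<open>degree Q \<le> m\<close>] by (simp add: D_def)
  moreover have "real j + b \<noteq> 0" if "j < m" for j
    using that assms by (simp add: b_def)
  ultimately have "D = 0" by (rule hypergeometric_op_eq_0_imp_eq_0)
  then have "poly D z = 0" by simp
  then have reflected: "(-1)^m * poly Q (1 - z) = poly Q z" by (simp add: D_def poly_pcompose)
  have "((-1::real)^m) * (-1)^m = 1" by (simp flip: power_add)
  with reflected have "poly Q (1 - z) = (-1)^m * poly Q z" by (metis mult.assoc mult_1)
  then show ?thesis by (simp add: Q_def b_def poly_hyp2f1_poly)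
qed

lemma set_integral_odd_eq_0:
  fixes g :: "real \<Rightarrow> real"
  assumes odd: "\<And>s. g (- s) = - g s"
  shows "(LINT s:{-a..a}|lborel. g s) = 0"
proof -
  have "{s. - s \<in> {-a..a}} = {-a..a}" by auto
  then have "(LINT s:{-a..a}|lborel. g s) = (LINT s:{-a..a}|lborel. - g s)"
    using set_integral_reflect[of "{-a..a}" g] by (simp only: odd)
  also have "\<dots> = - (LINT s:{-a..a}|lborel. g s)"
    unfolding set_lebesgue_integral_def by (simp flip: Bochner_Integration.integral_minus)
  finally show ?thesis by simp
qed

text \<open>Without integrability the left-hand side is the junk value \<open>0\<close>, hence the inequality
  instead of an equation.\<close>
lemma abs_set_integral_odd_le_tail:
  fixes g :: "real \<Rightarrow> real"
  assumes odd: "\<And>s. g (- s) = - g s" and "0 \<le> a" "a \<le> b"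
  shows "\<bar>LINT s:{-a..b}|lborel. g s\<bar> \<le> \<bar>LINT s:{a<..b}|lborel. g s\<bar>"
proof (cases "set_integrable lborel {-a..b} g")
  case True
  have split: "{-a..b} = {-a..a} \<union> {a<..b}" using assms by auto
  have "(LINT s:{-a..b}|lborel. g s) = (LINT s:{-a..a}|lborel. g s) + (LINT s:{a<..b}|lborel. g s)"
    unfolding split
    by (rule set_integral_Un) (auto intro: set_integrable_subset[OF True] simp: split)
  then show ?thesis using set_integral_odd_eq_0[of g a] odd by simp
next
  case False
  then show ?thesis
    by (simp add: set_lebesgue_integral_def set_integrable_def not_integrable_integral_eq)
qed

lemma abs_set_integral_Ioc_le:
  fixes f :: "real \<Rightarrow> real"
  assumes "a \<le> b" and bound: "\<And>x. x \<in> {a<..b} \<Longrightarrow> \<bar>f x\<bar> \<le> B"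
  shows "\<bar>LINT x:{a<..b}|lborel. f x\<bar> \<le> B * (b - a)"
proof (cases "set_integrable lborel {a<..b} f")
  case True
  have const: "set_integrable lborel {a<..b} (\<lambda>x. B)"
    by (rule set_integrable_subset[OF borel_integrable_atLeastAtMost'[of a b]]) auto
  have "\<bar>LINT x:{a<..b}|lborel. f x\<bar> \<le> (LINT x:{a<..b}|lborel. \<bar>f x\<bar>)"
    using set_integral_norm_bound[OF True] by simp
  also have "\<dots> \<le> (LINT x:{a<..b}|lborel. B)"
    using set_integrable_norm[OF True] by (intro set_integral_mono const) (auto simp: bound)
  also have "\<dots> = B * (b - a)"
    using \<open>a \<le> b\<close> by (simp add: set_integral_const)
  finally show ?thesis .
next
  case False
  then have "(LINT x:{a<..b}|lborel. f x) = 0"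
    by (simp add: set_lebesgue_integral_def set_integrable_def not_integrable_integral_eq)
  moreover have "0 \<le> B * (b - a)"
  proof (cases "a < b")
    case True
    then have "0 \<le> B" using bound[of "(a + b) / 2"] by simp
    with \<open>a \<le> b\<close> show ?thesis by simp
  qed (use \<open>a \<le> b\<close> in simp)
  ultimately show ?thesis by simp
qed

lemma abs_sum_power_le:
  fixes c :: "nat \<Rightarrow> real"
  assumes "\<bar>x\<bar> \<le> X" "1 \<le> X"
  shows "\<bar>\<Sum>i\<le>k. c i * x^i\<bar> \<le> (\<Sum>i\<le>k. \<bar>c i\<bar>) * X^k"
proof -
  have "\<bar>\<Sum>i\<le>k. c i * x^i\<bar> \<le> (\<Sum>i\<le>k. \<bar>c i\<bar> * X^k)"
  proof (rule order_trans[OF sum_abs sum_mono])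
    fix i assume "i \<in> {..k}"
    then have "\<bar>x\<bar>^i \<le> X^k"
      using assms by (meson atMost_iff order_trans power_increasing power_mono abs_ge_zero)
    then show "\<bar>c i * x^i\<bar> \<le> \<bar>c i\<bar> * X^k"
      by (simp add: abs_mult power_abs mult_left_mono)
  qed
  then show ?thesis by (simp add: sum_distrib_right)
qed

lemma laguerre_growth:
  obtains A where "\<And>x X. \<bar>x\<bar> \<le> X \<Longrightarrow> 1 \<le> X \<Longrightarrow> \<bar>laguerre k \<alpha> x\<bar> \<le> A * X^k"
proof
  fix x X :: real
  assume "\<bar>x\<bar> \<le> X" "1 \<le> X"
  have "laguerre k \<alpha> x = (\<Sum>i\<le>k. ((-1)^i * ((real k + \<alpha>) gchoose (k - i)) / fact i) * x^i)"
    unfolding laguerre_def by (simp add: field_simps)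
  then show "\<bar>laguerre k \<alpha> x\<bar> \<le>
      (\<Sum>i\<le>k. \<bar>(-1)^i * ((real k + \<alpha>) gchoose (k - i)) / fact i\<bar>) * X^k"
    using abs_sum_power_le[OF \<open>\<bar>x\<bar> \<le> X\<close> \<open>1 \<le> X\<close>] by (simp only:)
qed

lemma hyp2f1_term_growth:
  obtains A where "\<And>x X. \<bar>x\<bar> \<le> X \<Longrightarrow> 1 \<le> X \<Longrightarrow> \<bar>hyp2f1_term m b c x\<bar> \<le> A * X^m"
proof
  fix x X :: real
  assume "\<bar>x\<bar> \<le> X" "1 \<le> X"
  then show "\<bar>hyp2f1_term m b c x\<bar> \<le>
      (\<Sum>j\<le>m. \<bar>pochhammer (- real m) j * pochhammer b j / (pochhammer c j * fact j)\<bar>) * X^m"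
    unfolding hyp2f1_term_def by (rule abs_sum_power_le)
qed

lemma powr_le_of_comparable:
  fixes s t e c :: real
  assumes "0 < t" "1 \<le> c" "t / c \<le> s" "s \<le> c * t"
  shows "s powr e \<le> c powr \<bar>e\<bar> * t powr e"
proof (cases "e \<ge> 0")
  case True
  have "s powr e \<le> (c * t) powr e"
    using assms True by (intro powr_mono2) (auto intro: order_trans[rotated])
  also have "\<dots> = c powr \<bar>e\<bar> * t powr e"
    using assms True by (simp add: powr_mult)
  finally show ?thesis .
next
  case False
  have "0 < t / c" using assms by simp
  then have "s powr e \<le> (t / c) powr e"
    using assms False by (intro powr_mono2') auto
  also have "\<dots> = t powr e / c powr e"
    using assms by (simp add: powr_divide)
  also have "\<dots> = c powr \<bar>e\<bar> * t powr e"
    using False by (simp add: powr_minus_divide)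
  finally show ?thesis .
qed

definition Fsol_integrand :: "nat \<Rightarrow> nat \<Rightarrow> real \<Rightarrow> real \<Rightarrow> real \<Rightarrow> real \<Rightarrow> real \<Rightarrow> real" where
  "Fsol_integrand l n \<mu> C0 r t s =
     F0 l n \<mu> C0 s * hyp2f1_term (l - 1) (real l + 2) 2 ((t^2 - (r - s)^2) / (4 * r * s))"

lemma Fsol_eq_Ffree_minus_integral:
  "Fsol l n \<mu> C0 r t = Ffree l n \<mu> C0 r t
     - real (l * (l + 1)) * t / (4 * r^2) * (LINT s:{r - t..r + t}|lborel. Fsol_integrand l n \<mu> C0 r t s)"
  unfolding Fsol_def Fsol_integrand_def ..

lemma F0_uminus: "F0 l n \<mu> C0 (- s) = (-1)^l * F0 l n \<mu> C0 s"
proof -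
  have "((-1::real)^l) * (-1)^l = 1" by (simp flip: power_add)
  then show ?thesis
    by (cases s "0::real" rule: linorder_cases) (simp_all add: F0_def mult.assoc[symmetric])
qed

lemma Fsol_integrand_odd:
  assumes "l \<ge> 1" "r \<noteq> 0"
  shows "Fsol_integrand l n \<mu> C0 r t (- s) = - Fsol_integrand l n \<mu> C0 r t s"
proof (cases "s = 0")
  case True
  then show ?thesis by (simp add: Fsol_integrand_def F0_def)
next
  case False
  define H where "H = hyp2f1_term (l - 1) (real l + 2) 2"
  define z where "z = (t^2 - (r - s)^2) / (4 * r * s)"
  have H_reflect: "H (1 - x) = (-1)^(l - 1) * H x" for x
    using hyp2f1_term_reflect[of 2 "l - 1" x] assms(1) by (simp add: H_def of_nat_diff add.commute)
  have arg_reflect: "(t^2 - (r - - s)^2) / (4 * r * - s) = 1 - z"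
    using False assms(2) unfolding z_def
    by (simp add: field_simps) (simp add: power2_eq_square algebra_simps)
  have "Fsol_integrand l n \<mu> C0 r t (- s) = (-1)^l * F0 l n \<mu> C0 s * ((-1)^(l - 1) * H z)"
    unfolding Fsol_integrand_def H_def[symmetric] arg_reflect F0_uminus H_reflect ..
  also have "\<dots> = ((-1)^l * (-1)^(l - 1)) * (F0 l n \<mu> C0 s * H z)"
    by (simp add: mult_ac)
  also have "(-1)^l * (-1)^(l - 1) = (-1::real)"
    using assms(1) by (simp flip: power_add)
  finally show ?thesis by (simp add: Fsol_integrand_def H_def z_def)
qed

lemma F0_window_bound:
  assumes "r > 0"
  obtains K where "\<And>t s. max 1 (2 * r) \<le> t \<Longrightarrow> s \<in> {t - r<..t + r} \<Longrightarrow>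
    \<bar>F0 l n \<mu> C0 s\<bar> \<le> K * t powr (\<mu> - 1/2 + real (n - l - 1)) * exp (- t / 2)"
proof -
  define k where "k = n - l - 1"
  define e where "e = \<mu> - 1/2"
  obtain A where A: "\<And>x X. \<bar>x\<bar> \<le> X \<Longrightarrow> 1 \<le> X \<Longrightarrow> \<bar>laguerre k (2 * \<mu>) x\<bar> \<le> A * X^k"
    using laguerre_growth by blast
  show thesis
  proof (rule that[of "\<bar>C0\<bar> * 2 powr \<bar>e\<bar> * exp (r / 2) * A * 2^k"])
    fix t s :: real
    assume "max 1 (2 * r) \<le> t" "s \<in> {t - r<..t + r}"
    then have "1 \<le> t" "t / 2 \<le> s" "s \<le> 2 * t" "s \<le> t + r" by auto
    then have "0 < s" by simp
    have "\<bar>F0 l n \<mu> C0 s\<bar> = \<bar>C0\<bar> * s powr e * exp (- s / 2) * \<bar>laguerre k (2 * \<mu>) s\<bar>"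
      using \<open>0 < s\<close> by (simp add: F0_def e_def k_def abs_mult)
    also have "\<dots> \<le> \<bar>C0\<bar> * (2 powr \<bar>e\<bar> * t powr e) * (exp (r / 2) * exp (- t / 2)) * (A * (2 * t)^k)"
    proof (intro mult_mono mult_left_mono)
      show "s powr e \<le> 2 powr \<bar>e\<bar> * t powr e"
        by (rule powr_le_of_comparable) (use \<open>1 \<le> t\<close> \<open>t / 2 \<le> s\<close> \<open>s \<le> 2 * t\<close> in auto)
      show "exp (- s / 2) \<le> exp (r / 2) * exp (- t / 2)"
        using \<open>s \<in> {t - r<..t + r}\<close> by (simp flip: exp_add)
      show "\<bar>laguerre k (2 * \<mu>) s\<bar> \<le> A * (2 * t)^k"
        using A[of s "2 * t"] \<open>0 < s\<close> \<open>1 \<le> t\<close> \<open>s \<le> 2 * t\<close> by simp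
    qed auto
    also have "\<dots> = \<bar>C0\<bar> * 2 powr \<bar>e\<bar> * exp (r / 2) * A * 2^k * (t powr e * t^k) * exp (- t / 2)"
      by (simp add: power_mult_distrib)
    also have "t powr e * t^k = t powr (\<mu> - 1/2 + real (n - l - 1))"
      using \<open>1 \<le> t\<close> by (simp add: e_def k_def powr_add powr_realpow)
    finally show "\<bar>F0 l n \<mu> C0 s\<bar> \<le> \<bar>C0\<bar> * 2 powr \<bar>e\<bar> * exp (r / 2) * A * 2^k
        * t powr (\<mu> - 1/2 + real (n - l - 1)) * exp (- t / 2)" .
  qed
qed

lemma hyp2f1_argument_bound:
  fixes r t s :: real
  assumes "r > 0" "2 * r \<le> t" "s \<in> {t - r<..t + r}"
  shows "\<bar>(t^2 - (r - s)^2) / (4 * r * s)\<bar> \<le> t / (2 * r)"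
proof -
  have "t / 2 \<le> s" "0 < t" using assms by auto
  have "(r - s)^2 \<le> t^2"
    using assms by (intro abs_le_square_iff[THEN iffD1]) auto
  then have "\<bar>(t^2 - (r - s)^2) / (4 * r * s)\<bar> = (t^2 - (r - s)^2) / (4 * r * s)"
    using assms \<open>t / 2 \<le> s\<close> \<open>0 < t\<close> by simp
  also have "\<dots> \<le> t^2 / (4 * r * s)"
    using assms \<open>t / 2 \<le> s\<close> \<open>0 < t\<close> by (intro divide_right_mono) auto
  also have "\<dots> \<le> t^2 / (4 * r * (t / 2))"
    using assms \<open>t / 2 \<le> s\<close> \<open>0 < t\<close> by (intro divide_left_mono) auto
  also have "\<dots> = t / (2 * r)"
    using \<open>0 < t\<close> by (simp add: power2_eq_square)
  finally show ?thesis .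
qed

lemma Fsol_integrand_window_bound:
  assumes "l \<ge> 1" "n \<ge> l + 1" "r > 0"
  obtains K where "\<And>t s. max 1 (2 * r) \<le> t \<Longrightarrow> s \<in> {t - r<..t + r} \<Longrightarrow>
    \<bar>Fsol_integrand l n \<mu> C0 r t s\<bar> \<le> K * t powr (real n + \<mu> - 5/2) * exp (- t / 2)"
proof -
  obtain K where K: "\<And>t s. max 1 (2 * r) \<le> t \<Longrightarrow> s \<in> {t - r<..t + r} \<Longrightarrow>
      \<bar>F0 l n \<mu> C0 s\<bar> \<le> K * t powr (\<mu> - 1/2 + real (n - l - 1)) * exp (- t / 2)"
    using F0_window_bound[OF \<open>r > 0\<close>] by blast
  obtain A where A: "\<And>x X. \<bar>x\<bar> \<le> X \<Longrightarrow> 1 \<le> X \<Longrightarrow>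
      \<bar>hyp2f1_term (l - 1) (real l + 2) 2 x\<bar> \<le> A * X^(l - 1)"
    using hyp2f1_term_growth by blast
  define c where "c = 1 + 1 / (2 * r)"
  show thesis
  proof (rule that[of "K * A * c^(l - 1)"])
    fix t s
    assume t: "max 1 (2 * r) \<le> t" and s: "s \<in> {t - r<..t + r}"
    define z where "z = (t^2 - (r - s)^2) / (4 * r * s)"
    have "\<bar>z\<bar> \<le> c * t"
      using hyp2f1_argument_bound[OF \<open>r > 0\<close> _ s] t \<open>r > 0\<close>
      by (simp add: z_def c_def algebra_simps)
    moreover have "1 \<le> c * t"
      using t \<open>r > 0\<close> by (simp add: c_def distrib_right add_increasing2)
    ultimately have "\<bar>hyp2f1_term (l - 1) (real l + 2) 2 z\<bar> \<le> A * (c * t)^(l - 1)"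
      by (rule A)
    then have "\<bar>Fsol_integrand l n \<mu> C0 r t s\<bar>
        \<le> (K * t powr (\<mu> - 1/2 + real (n - l - 1)) * exp (- t / 2)) * (A * (c * t)^(l - 1))"
      unfolding Fsol_integrand_def z_def[symmetric] abs_mult
      using K[OF t s] by (intro mult_mono) (auto intro: order_trans[OF abs_ge_zero])
    also have "\<dots> = K * A * c^(l - 1) * (t powr (\<mu> - 1/2 + real (n - l - 1)) * t^(l - 1)) * exp (- t / 2)"
      by (simp add: power_mult_distrib)
    also have "t powr (\<mu> - 1/2 + real (n - l - 1)) * t^(l - 1)
        = t powr (\<mu> - 1/2 + real (n - l - 1) + real (l - 1))"
      using t by (simp add: powr_add powr_realpow)
    also have "\<mu> - 1/2 + real (n - l - 1) + real (l - 1) = real n + \<mu> - 5/2"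
      using assms(1,2) by (simp add: of_nat_diff)
    finally show "\<bar>Fsol_integrand l n \<mu> C0 r t s\<bar> \<le> K * A * c^(l - 1) * t powr (real n + \<mu> - 5/2) * exp (- t / 2)" .
  qed
qed

lemma Fsol_integral_bound:
  assumes "l \<ge> 1" "n \<ge> l + 1" "r > 0"
  obtains K where "\<And>t. max 1 (2 * r) \<le> t \<Longrightarrow>
    \<bar>LINT s:{r - t..r + t}|lborel. Fsol_integrand l n \<mu> C0 r t s\<bar> \<le> K * t powr (real n + \<mu> - 5/2) * exp (- t / 2)"
proof -
  obtain K where K: "\<And>t s. max 1 (2 * r) \<le> t \<Longrightarrow> s \<in> {t - r<..t + r} \<Longrightarrow>
      \<bar>Fsol_integrand l n \<mu> C0 r t s\<bar> \<le> K * t powr (real n + \<mu> - 5/2) * exp (- t / 2)"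
    using Fsol_integrand_window_bound[OF assms] by blast
  show thesis
  proof (rule that[of "2 * r * K"])
    fix t
    assume t: "max 1 (2 * r) \<le> t"
    have "\<bar>LINT s:{- (t - r)..t + r}|lborel. Fsol_integrand l n \<mu> C0 r t s\<bar>
        \<le> \<bar>LINT s:{t - r<..t + r}|lborel. Fsol_integrand l n \<mu> C0 r t s\<bar>"
      using t assms by (intro abs_set_integral_odd_le_tail Fsol_integrand_odd) auto
    also have "\<dots> \<le> K * t powr (real n + \<mu> - 5/2) * exp (- t / 2) * ((t + r) - (t - r))"
      using t assms by (intro abs_set_integral_Ioc_le K) auto
    finally show "\<bar>LINT s:{r - t..r + t}|lborel. Fsol_integrand l n \<mu> C0 r t s\<bar>
        \<le> 2 * r * K * t powr (real n + \<mu> - 5/2) * exp (- t / 2)"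
      by (simp add: algebra_simps)
  qed
qed

theorem lemma2p1:
  fixes l n :: nat and \<mu> C0 r :: real
  assumes "l \<ge> 1" and "n \<ge> l + 1" and "\<mu> > real l - 3/2" and "r > 0"
  shows "\<exists>C T. C > 0 \<and> T > 0 \<and> (\<forall>t \<ge> T.
           \<bar>Fsol l n \<mu> C0 r t - Ffree l n \<mu> C0 r t\<bar>
             \<le> C * exp (- t / 2) * t powr (real n + \<mu> - 3/2))"
proof -
  \<comment> \<open>The hypothesis on \<mu> only makes the integral converge at s = 0; the bound holds regardless,
    since a non-integrable Bochner integral is 0.\<close>
  obtain K where K: "\<And>t. max 1 (2 * r) \<le> t \<Longrightarrow>
      \<bar>LINT s:{r - t..r + t}|lborel. Fsol_integrand l n \<mu> C0 r t s\<bar> \<le> K * t powr (real n + \<mu> - 5/2) * exp (- t / 2)"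
    using Fsol_integral_bound[OF assms(1,2,4)] by blast
  define C where "C = max 1 (real (l * (l + 1)) / (4 * r^2) * K)"
  show ?thesis
  proof (intro exI conjI allI impI)
    show "C > 0" "max 1 (2 * r) > 0" by (simp_all add: C_def)
    fix t
    assume t: "max 1 (2 * r) \<le> t"
    then have "0 < t" by simp
    have "\<bar>Fsol l n \<mu> C0 r t - Ffree l n \<mu> C0 r t\<bar>
        = real (l * (l + 1)) * t / (4 * r^2) * \<bar>LINT s:{r - t..r + t}|lborel. Fsol_integrand l n \<mu> C0 r t s\<bar>"
      using \<open>0 < t\<close> by (simp add: Fsol_eq_Ffree_minus_integral abs_mult)
    also have "\<dots> \<le> real (l * (l + 1)) * t / (4 * r^2) * (K * t powr (real n + \<mu> - 5/2) * exp (- t / 2))"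
      using K[OF t] \<open>0 < t\<close> by (intro mult_left_mono) auto
    also have "\<dots> = real (l * (l + 1)) / (4 * r^2) * K * exp (- t / 2) * (t powr (real n + \<mu> - 5/2) * t)"
      by (simp add: ac_simps)
    also have "t powr (real n + \<mu> - 5/2) * t = t powr (real n + \<mu> - 3/2)"
      using \<open>0 < t\<close> powr_add[of t "real n + \<mu> - 5/2" 1] by simp
    also have "real (l * (l + 1)) / (4 * r^2) * K * exp (- t / 2) * t powr (real n + \<mu> - 3/2)
        \<le> C * exp (- t / 2) * t powr (real n + \<mu> - 3/2)"
      by (intro mult_right_mono) (auto simp: C_def)
    finally show "\<bar>Fsol l n \<mu> C0 r t - Ffree l n \<mu> C0 r t\<bar> \<le> C * exp (- t / 2) * t powr (real n + \<mu> - 3/2)" .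
  qed
qed

end
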